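(* There exist absolute constants $0<C_0<1/4$, $c>0$ and $N_0>0$ such that the following holds. Let $P$ be a set of $n$ points in $\mathbb{R}^2$ in general position, let $0<\epsilon<1$ with $\epsilon n\ge N_0$, let $0<\sigma\le 1$, let $r_0\ge 1$ be an integer, let $\Pi\subseteq\binom{P}{2}$, and put $\epsilon_0:=\sigma\epsilon/(100 r_0)$. Let $K$ be a convex set that is $(\epsilon,\sigma/2)$-restricted to $(P,\Pi)$, with witness set $P_K$ and $\Pi_K=\binom{P_K}{2}\cap\Pi$, and suppose that $K$ is not $(C_0\sigma\epsilon)$-crowded in $\Lambda(r_0)$. Then there is a slab $\tau\in\Lambda(r_0)$ (a middle slab for $K$) such that (M1) $\epsilon_0 n\le |P_K\cap\tau|\le C_0\sigma\epsilon n$, and (M2) at least $c\,\sigma\epsilon^2n^2/r_0$ edges of $\Pi_K$ cross $\tau$ transversally.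
   Context: General position: no three points of $P$ are collinear and no two lie on a common vertical line. $\binom{P}{2}$ denotes the set of segments spanned by pairs of points of $P$. A convex set $K$ is $(\epsilon,\sigma)$-restricted to $(P,\Pi)$ if $P\cap K$ contains a subset $P_K$ of exactly $\lceil\epsilon n\rceil$ points such that $\binom{P_K}{2}\cap\Pi$ contains at least $\sigma\binom{\lceil \epsilon n\rceil}{2}$ edges (one such $P_K$ is fixed as the witness set). For an integer $r\ge1$, ${\cal Y}(r)$ is a set of $r$ vertical lines, none through a point of $P$, such that each of the $r+1$ open vertical slabs of $\mathbb{R}^2\setminus\bigcup{\cal Y}(r)$ contains between $\lfloor n/(r+1)\rfloor$ and $\lceil n/(r+1)\rceil$ points of $P$; $\Lambda(r)$ is the collection of these slabs. $K$ is $\epsilon'$-crowded in $\Lambda(r)$ if some slab of $\Lambda(r)$ contains at least $\epsilon' n$ points of $P\cap K$. An edge $pq$ crosses a slab $\tau$ transversally if the segment $pq$ meets $\tau$ and neither $p$ nor $q$ lies in $\tau$. *)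

theory Defs
  imports "HOL-Analysis.Analysis"
begin

type_synonym pt = "real \<times> real"

definition general_position :: "pt set \<Rightarrow> bool" where
  "general_position P \<longleftrightarrow>
     (\<forall>p\<in>P. \<forall>q\<in>P. \<forall>s\<in>P. p \<noteq> q \<and> p \<noteq> s \<and> q \<noteq> s \<longrightarrow> \<not> collinear {p, q, s}) \<and>
     (\<forall>p\<in>P. \<forall>q\<in>P. p \<noteq> q \<longrightarrow> fst p \<noteq> fst q)"

definition pairs2 :: "pt set \<Rightarrow> pt set set" where
  "pairs2 P = {{p, q} | p q. p \<in> P \<and> q \<in> P \<and> p \<noteq> q}"

definition restricted_witness ::
  "real \<Rightarrow> real \<Rightarrow> pt set \<Rightarrow> pt set set \<Rightarrow> pt set \<Rightarrow> pt set \<Rightarrow> bool" where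
  "restricted_witness eps sg P EPi K PK \<longleftrightarrow>
     PK \<subseteq> P \<inter> K \<and> card PK = nat \<lceil>eps * real (card P)\<rceil> \<and>
     real (card (pairs2 PK \<inter> EPi)) \<ge> sg * real (nat \<lceil>eps * real (card P)\<rceil> choose 2)"

text \<open>Slab i (0 \<le> i \<le> r) determined by vertical lines x = y 1 < ... < x = y r.\<close>
definition slab :: "nat \<Rightarrow> (nat \<Rightarrow> real) \<Rightarrow> nat \<Rightarrow> pt set" where
  "slab r y i = {p. (0 < i \<longrightarrow> y i < fst p) \<and> (i < r \<longrightarrow> fst p < y (i + 1))}"

definition vertical_lines :: "pt set \<Rightarrow> nat \<Rightarrow> (nat \<Rightarrow> real) \<Rightarrow> bool" where
  "vertical_lines P r y \<longleftrightarrow>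
     strict_mono_on {1..r} y \<and>
     (\<forall>i\<in>{1..r}. \<forall>p\<in>P. fst p \<noteq> y i) \<and>
     (\<forall>i\<le>r. card P div (r + 1) \<le> card (P \<inter> slab r y i) \<and>
              real (card (P \<inter> slab r y i)) \<le> real_of_int \<lceil>real (card P) / real (r + 1)\<rceil>)"

definition crowded :: "real \<Rightarrow> pt set \<Rightarrow> nat \<Rightarrow> (nat \<Rightarrow> real) \<Rightarrow> pt set \<Rightarrow> bool" where
  "crowded eps' P r y K \<longleftrightarrow> (\<exists>i\<le>r. real (card (P \<inter> K \<inter> slab r y i)) \<ge> eps' * real (card P))"

definition crosses_transversally :: "pt set \<Rightarrow> pt set \<Rightarrow> bool" where
  "crosses_transversally e tau \<longleftrightarrow>
     (\<exists>p q. e = {p, q} \<and> closed_segment p q \<inter> tau \<noteq> {} \<and> p \<notin> tau \<and> q \<notin> tau)"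

end

theory Submission
  imports Defs
begin

text \<open>Call a slab heavy if it contains at least \<open>\<epsilon>\<^sub>0 n\<close> points of \<open>P\<^sub>K\<close>. Since
  \<open>K\<close> is not crowded, every slab holds fewer than \<open>C\<^sub>0\<sigma>\<epsilon>n\<close> points of \<open>P\<^sub>K\<close>, so the light
  slabs together hold at most \<open>2C\<^sub>0\<sigma>\<epsilon>n\<close> of them. An edge whose endpoints lie in slabs
  separated by a heavy slab crosses that slab transversally. For any point \<open>p\<close>, a partner
  \<open>q\<close> separated from \<open>p\<close> by no heavy slab lies in a light slab or in one of at most three
  heavy slabs (that of \<open>p\<close> and the nearest heavy slabs on either side), so only
  \<open>O(C\<^sub>0\<sigma>\<epsilon>\<^sup>2n\<^sup>2)\<close> edges of \<open>\<Pi>\<^sub>K\<close> miss every heavy slab, against about \<open>\<sigma>\<epsilon>\<^sup>2n\<^sup>2/4\<close>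
  edges in total. Pigeonholing the rest over the at most \<open>r\<^sub>0 + 1\<close> heavy slabs gives the
  middle slab.\<close>

lemma slab_unique:
  assumes mono: "strict_mono_on {1..r} y" and "i \<le> r" "j \<le> r"
    and "p \<in> slab r y i" "p \<in> slab r y j"
  shows "i = j"
proof -
  have False if "a < b" "b \<le> r" "p \<in> slab r y a" "p \<in> slab r y b" for a b
  proof -
    have "fst p < y (a + 1)" "y b < fst p" using that unfolding slab_def by auto
    moreover have "y (a + 1) \<le> y b" using strict_mono_on_leD[OF mono] that by simp
    ultimately show False by linarith
  qed
  then show ?thesis using assms by (metis linorder_neqE_nat)
qed

lemma slab_cover:
  assumes "\<forall>i\<in>{1..r}. fst p \<noteq> y i"
  shows "\<exists>i\<le>r. p \<in> slab r y i"
proof -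
  define k where "k = Max ({0} \<union> {i\<in>{1..r}. y i < fst p})"
  have k: "k = 0 \<or> k \<in> {1..r} \<and> y k < fst p"
    unfolding k_def using Max_in[of "{0} \<union> {i\<in>{1..r}. y i < fst p}"] by auto
  have above: "\<not> y i < fst p" if "k < i" "i \<le> r" for i
  proof
    assume "y i < fst p"
    then have "i \<le> k" unfolding k_def using that by (intro Max_ge) auto
    then show False using that(1) by simp
  qed
  have "k \<le> r" using k by auto
  moreover have "fst p < y (k + 1)" if "k < r"
  proof -
    have "fst p \<noteq> y (k + 1)" using assms that by simp
    then show ?thesis using above[of "k + 1"] that by linarith
  qed
  then have "p \<in> slab r y k" unfolding slab_def using k by auto
  ultimately show ?thesis by blast
qed

definition slab_index :: "nat \<Rightarrow> (nat \<Rightarrow> real) \<Rightarrow> pt \<Rightarrow> nat" where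
  "slab_index r y p = (THE i. i \<le> r \<and> p \<in> slab r y i)"

lemma slab_index:
  assumes "vertical_lines P r y" "p \<in> P"
  shows "slab_index r y p \<le> r" "p \<in> slab r y (slab_index r y p)"
proof -
  have mono: "strict_mono_on {1..r} y" using assms(1) unfolding vertical_lines_def by blast
  obtain i where i: "i \<le> r" "p \<in> slab r y i"
    using assms slab_cover[of r p y] unfolding vertical_lines_def by blast
  have "\<exists>!i. i \<le> r \<and> p \<in> slab r y i"
    using i slab_unique[OF mono] by (intro ex1I[of _ i]) blast+
  from theI'[OF this] show "slab_index r y p \<le> r" "p \<in> slab r y (slab_index r y p)"
    unfolding slab_index_def by auto
qed

lemma slab_index_eq_iff:
  assumes "vertical_lines P r y" "p \<in> P" "i \<le> r"
  shows "slab_index r y p = i \<longleftrightarrow> p \<in> slab r y i"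
  using slab_index[OF assms(1,2)] slab_unique[of r y] assms
  unfolding vertical_lines_def by blast

lemma crosses_transversally_slab_between:
  assumes mono: "strict_mono_on {1..r} y" and p: "p \<in> slab r y a" and q: "q \<in> slab r y b"
    and "a < h" "h < b" "b \<le> r"
  shows "crosses_transversally {p, q} (slab r y h)"
proof -
  have yp: "fst p < y (a + 1)" and yq: "y b < fst q"
    using p q assms unfolding slab_def by auto
  have ys: "y (a + 1) \<le> y h" "y h < y (h + 1)" "y (h + 1) \<le> y b"
    using strict_mono_on_leD[OF mono] strict_mono_onD[OF mono] assms by auto
  define t where "t = (max (fst p) (y h) + min (fst q) (y (h + 1))) / 2"
  have t: "fst p < t" "t < fst q" "y h < t" "t < y (h + 1)"
    using yp yq ys unfolding t_def max_def min_def by auto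
  define u where "u = (t - fst p) / (fst q - fst p)"
  have u: "0 \<le> u" "u \<le> 1" unfolding u_def using t by auto
  define z where "z = (1 - u) *\<^sub>R p + u *\<^sub>R q"
  have "z \<in> closed_segment p q" unfolding z_def in_segment using u by blast
  moreover have "fst z = fst p + u * (fst q - fst p)"
    unfolding z_def by (simp add: algebra_simps)
  then have "fst z = t" using t unfolding u_def by simp
  then have "z \<in> slab r y h" unfolding slab_def using t by auto
  moreover have "p \<notin> slab r y h" "q \<notin> slab r y h"
    using slab_unique[OF mono, of a h p] slab_unique[OF mono, of b h q] p q assms by auto
  ultimately show ?thesis unfolding crosses_transversally_def by blast
qed

lemma crosses_transversally_slab_index_between:
  assumes lines: "vertical_lines P r y" and "p \<in> P" "q \<in> P"
    and h: "h \<in> {min (slab_index r y p) (slab_index r y q)<..<max (slab_index r y p) (slab_index r y q)}"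
  shows "crosses_transversally {p, q} (slab r y h)"
proof -
  have mono: "strict_mono_on {1..r} y" using lines unfolding vertical_lines_def by blast
  note p = slab_index[OF lines \<open>p \<in> P\<close>] and q = slab_index[OF lines \<open>q \<in> P\<close>]
  show ?thesis
  proof (cases "slab_index r y p \<le> slab_index r y q")
    case True
    then show ?thesis
      using crosses_transversally_slab_between[OF mono p(2) q(2)] q(1) h by auto
  next
    case False
    then show ?thesis
      using crosses_transversally_slab_between[OF mono q(2) p(2)] p(1) h
      by (auto simp: insert_commute)
  qed
qed

lemma card_adjacent_le_3:
  fixes H :: "'a::linorder set"
  assumes H: "finite H"
  shows "card {j\<in>H. {min k j<..<max k j} \<inter> H = {}} \<le> 3"
proof -
  define U where "U = {h\<in>H. k < h}"
  define D where "D = {h\<in>H. h < k}"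
  have fin: "finite U" "finite D" using H unfolding U_def D_def by auto
  have "{j\<in>H. {min k j<..<max k j} \<inter> H = {}} \<subseteq> {k, Min U, Max D}"
  proof
    fix j assume j: "j \<in> {j\<in>H. {min k j<..<max k j} \<inter> H = {}}"
    consider "j = k" | "k < j" | "j < k" by fastforce
    then show "j \<in> {k, Min U, Max D}"
    proof cases
      case 2
      then have "j \<in> U" using j unfolding U_def by auto
      then have "Min U \<le> j" "Min U \<in> U" using fin Min_le Min_in by blast+
      moreover have "\<not> Min U < j" using j 2 \<open>Min U \<in> U\<close> unfolding U_def by auto
      ultimately show ?thesis by simp
    next
      case 3
      then have "j \<in> D" using j unfolding D_def by auto
      then have "j \<le> Max D" "Max D \<in> D" using fin Max_ge Max_in by blast+
      moreover have "\<not> j < Max D" using j 3 \<open>Max D \<in> D\<close> unfolding D_def by auto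
      ultimately show ?thesis by simp
    qed simp
  qed
  then have "card {j\<in>H. {min k j<..<max k j} \<inter> H = {}} \<le> card {k, Min U, Max D}"
    by (rule card_mono[rotated]) simp
  also have "\<dots> \<le> 3" by (simp add: card_insert_if)
  finally show ?thesis .
qed

lemma card_unseparated_pairs_le:
  fixes f :: "'a \<Rightarrow> 'b::linorder"
  assumes A: "finite A" and H: "finite H" and "0 \<le> b"
    and class_le: "\<And>j. j \<in> H \<Longrightarrow> real (card {q\<in>A. f q = j}) \<le> b"
  shows "real (card {{p, q} | p q. p \<in> A \<and> q \<in> A \<and> {min (f p) (f q)<..<max (f p) (f q)} \<inter> H = {}})
    \<le> real (card A) * (real (card {q\<in>A. f q \<notin> H}) + 3 * b)"
proof -
  define N where "N p = {q\<in>A. {min (f p) (f q)<..<max (f p) (f q)} \<inter> H = {}}" for p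
  define Adj where "Adj p = {j\<in>H. {min (f p) j<..<max (f p) j} \<inter> H = {}}" for p
  have N_le: "real (card (N p)) \<le> real (card {q\<in>A. f q \<notin> H}) + 3 * b" for p
  proof -
    have fin: "finite (Adj p)" using H unfolding Adj_def by simp
    have "N p \<subseteq> {q\<in>A. f q \<notin> H} \<union> (\<Union>j\<in>Adj p. {q\<in>A. f q = j})"
      unfolding N_def Adj_def by auto
    then have "card (N p) \<le> card ({q\<in>A. f q \<notin> H} \<union> (\<Union>j\<in>Adj p. {q\<in>A. f q = j}))"
      by (rule card_mono[rotated]) (use A fin in simp)
    also have "\<dots> \<le> card {q\<in>A. f q \<notin> H} + (\<Sum>j\<in>Adj p. card {q\<in>A. f q = j})"
      by (rule order_trans[OF card_Un_le add_left_mono[OF card_UN_le[OF fin]]])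
    finally have "real (card (N p)) \<le> real (card {q\<in>A. f q \<notin> H}) + (\<Sum>j\<in>Adj p. real (card {q\<in>A. f q = j}))"
      by (simp flip: of_nat_sum of_nat_add)
    also have "(\<Sum>j\<in>Adj p. real (card {q\<in>A. f q = j})) \<le> real (card (Adj p)) * b"
      using class_le by (intro sum_bounded_above) (auto simp: Adj_def)
    also have "\<dots> \<le> 3 * b"
      using card_adjacent_le_3[OF H, of "f p"] \<open>0 \<le> b\<close> unfolding Adj_def
      by (intro mult_right_mono) auto
    finally show ?thesis by simp
  qed
  have "{{p, q} | p q. p \<in> A \<and> q \<in> A \<and> {min (f p) (f q)<..<max (f p) (f q)} \<inter> H = {}}
      = (\<lambda>(p, q). {p, q}) ` Sigma A N"
    unfolding N_def by auto
  also have "card \<dots> \<le> card (Sigma A N)"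
    using A by (intro card_image_le) (simp add: N_def)
  also have "\<dots> = (\<Sum>p\<in>A. card (N p))"
    using A by (simp add: N_def)
  finally have "real (card {{p, q} | p q. p \<in> A \<and> q \<in> A \<and> {min (f p) (f q)<..<max (f p) (f q)} \<inter> H = {}})
      \<le> (\<Sum>p\<in>A. real (card (N p)))"
    by (simp flip: of_nat_sum)
  also have "\<dots> \<le> real (card A) * (real (card {q\<in>A. f q \<notin> H}) + 3 * b)"
    using N_le by (intro sum_bounded_above)
  finally show ?thesis .
qed

lemma card_outside_le:
  fixes f :: "'a \<Rightarrow> nat"
  assumes A: "finite A" and "f ` A \<subseteq> {..r}" and "0 \<le> t"
    and class_le: "\<And>j. j \<le> r \<Longrightarrow> j \<notin> H \<Longrightarrow> real (card {q\<in>A. f q = j}) \<le> t"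
  shows "real (card {q\<in>A. f q \<notin> H}) \<le> real (r + 1) * t"
proof -
  have "{q\<in>A. f q \<notin> H} \<subseteq> (\<Union>j\<in>{..r} - H. {q\<in>A. f q = j})"
    using assms(2) by auto
  then have "card {q\<in>A. f q \<notin> H} \<le> card (\<Union>j\<in>{..r} - H. {q\<in>A. f q = j})"
    by (rule card_mono[rotated]) (use A in simp)
  also have "\<dots> \<le> (\<Sum>j\<in>{..r} - H. card {q\<in>A. f q = j})"
    by (rule card_UN_le) simp
  finally have "real (card {q\<in>A. f q \<notin> H}) \<le> (\<Sum>j\<in>{..r} - H. real (card {q\<in>A. f q = j}))"
    by (simp flip: of_nat_sum)
  also have "\<dots> \<le> real (card ({..r} - H)) * t"
    using class_le by (intro sum_bounded_above) auto
  also have "\<dots> \<le> real (r + 1) * t"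
    using card_mono[of "{..r}" "{..r} - H"] \<open>0 \<le> t\<close> by (intro mult_right_mono) auto
  finally show ?thesis .
qed

lemma exists_card_UN_le_card_mult:
  assumes "finite I" "I \<noteq> {}"
  shows "\<exists>i\<in>I. card (\<Union>(C ` I)) \<le> card I * card (C i)"
proof -
  have "Max ((\<lambda>i. card (C i)) ` I) \<in> (\<lambda>i. card (C i)) ` I"
    using assms by (intro Max_in) auto
  then obtain i where i: "i \<in> I" "card (C i) = Max ((\<lambda>i. card (C i)) ` I)"
    by force
  have "card (\<Union>(C ` I)) \<le> (\<Sum>j\<in>I. card (C j))"
    using assms(1) by (rule card_UN_le)
  also have "\<dots> \<le> card I * card (C i)"
    using i assms(1) by (intro sum_bounded_above[of I _ "card (C i)", simplified]) simp
  finally show ?thesis using i(1) by blast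
qed

lemma card_edges_missing_heavy_slabs_le:
  assumes lines: "vertical_lines P r y" and "finite P" "A \<subseteq> P" "E \<subseteq> pairs2 A"
    and "H \<subseteq> {..r}" "0 \<le> t"
    and slab_le: "\<And>i. i \<le> r \<Longrightarrow> real (card (A \<inter> slab r y i)) \<le> b"
    and light_le: "\<And>i. i \<le> r \<Longrightarrow> i \<notin> H \<Longrightarrow> real (card (A \<inter> slab r y i)) \<le> t"
  shows "real (card {e\<in>E. \<not> (\<exists>h\<in>H. crosses_transversally e (slab r y h))})
    \<le> real (card A) * (real (r + 1) * t + 3 * b)"
proof -
  define f where "f = slab_index r y"
  have A: "finite A" using assms finite_subset by blast
  have H: "finite H" using \<open>H \<subseteq> {..r}\<close> finite_subset by blast
  have "0 \<le> b" using slab_le[of 0] by linarith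
  have f_le: "f ` A \<subseteq> {..r}" using slab_index(1)[OF lines] assms unfolding f_def by blast
  have index_class: "{q\<in>A. f q = i} = A \<inter> slab r y i" if "i \<le> r" for i
    using slab_index_eq_iff[OF lines _ that] assms unfolding f_def by blast
  let ?U = "{{p, q} | p q. p \<in> A \<and> q \<in> A \<and> {min (f p) (f q)<..<max (f p) (f q)} \<inter> H = {}}"
  have "{e\<in>E. \<not> (\<exists>h\<in>H. crosses_transversally e (slab r y h))} \<subseteq> ?U"
  proof clarify
    fix e assume e: "e \<in> E" "\<not> (\<exists>h\<in>H. crosses_transversally e (slab r y h))"
    then obtain p q where pq: "e = {p, q}" "p \<in> A" "q \<in> A"
      using \<open>E \<subseteq> pairs2 A\<close> unfolding pairs2_def by blast
    then have "{min (f p) (f q)<..<max (f p) (f q)} \<inter> H = {}"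
      using e crosses_transversally_slab_index_between[OF lines, of p q] assms
      unfolding f_def by blast
    then show "\<exists>p q. e = {p, q} \<and> p \<in> A \<and> q \<in> A \<and> {min (f p) (f q)<..<max (f p) (f q)} \<inter> H = {}"
      using pq by blast
  qed
  then have "card {e\<in>E. \<not> (\<exists>h\<in>H. crosses_transversally e (slab r y h))} \<le> card ?U"
    by (rule card_mono[rotated]) (rule finite_subset[of _ "Pow A"], use A in auto)
  also have "real (card ?U) \<le> real (card A) * (real (card {q\<in>A. f q \<notin> H}) + 3 * b)"
    by (rule card_unseparated_pairs_le[OF A H \<open>0 \<le> b\<close>])
      (use slab_le index_class \<open>H \<subseteq> {..r}\<close> in auto)
  also have "\<dots> \<le> real (card A) * (real (r + 1) * t + 3 * b)"
    using card_outside_le[OF A f_le \<open>0 \<le> t\<close>] light_le index_class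
    by (intro mult_left_mono add_right_mono) auto
  finally show ?thesis by simp
qed

lemma card_witness_slab_less_if_not_crowded:
  assumes "\<not> crowded c P r y K" "PK \<subseteq> P \<inter> K" "finite P" "i \<le> r"
  shows "real (card (PK \<inter> slab r y i)) < c * real (card P)"
proof -
  have "card (PK \<inter> slab r y i) \<le> card (P \<inter> K \<inter> slab r y i)"
    using assms(2,3) by (intro card_mono) auto
  then show ?thesis using assms(1,4) unfolding crowded_def by force
qed

lemma real_choose_two: "real (m choose 2) = real m * (real m - 1) / 2"
  by (simp add: binomial_gbinomial gbinomial_Suc numeral_2_eq_2 atMost_Suc)

lemma remaining_edges_ge:
  fixes sg X m G :: real
  assumes "0 < sg" "4 \<le> X" "X \<le> m" and edges: "sg / 2 * (m * (m - 1) / 2) \<le> G + m * (sg * X / 20)"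
  shows "sg * X^2 / 10 \<le> G"
proof -
  have "sg * X^2 / 10 \<le> sg * m^2 / 10"
    using assms by (intro mult_left_mono divide_right_mono power_mono) auto
  also have "\<dots> \<le> sg / 2 * (m * (m - 1) / 2) - m * (sg * m / 20)"
  proof -
    have "0 \<le> sg * m * (2 * m - 5)" using assms by simp
    then show ?thesis by (simp add: field_simps power2_eq_square)
  qed
  also have "\<dots> \<le> sg / 2 * (m * (m - 1) / 2) - m * (sg * X / 20)"
    using assms by (intro diff_left_mono mult_left_mono) auto
  finally show ?thesis using edges by linarith
qed

definition heavy_slabs :: "real \<Rightarrow> pt set \<Rightarrow> nat \<Rightarrow> (nat \<Rightarrow> real) \<Rightarrow> nat set" where
  "heavy_slabs t A r y = {i. i \<le> r \<and> t \<le> real (card (A \<inter> slab r y i))}"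

lemma card_edges_crossing_heavy_slabs_ge:
  fixes P :: "pt set" and r0 :: nat
  assumes fin: "finite P" and large: "4 \<le> eps * real (card P)" and "0 < sg" "1 \<le> r0"
    and witness: "restricted_witness eps (sg / 2) P EPi K PK"
    and lines: "vertical_lines P r0 y"
    and sparse: "\<not> crowded (1/100 * sg * eps) P r0 y K"
  shows "sg * (eps * real (card P))^2 / 10 \<le> real (card {e \<in> pairs2 PK \<inter> EPi.
    \<exists>h\<in>heavy_slabs (sg * eps / (100 * real r0) * real (card P)) PK r0 y.
      crosses_transversally e (slab r0 y h)})"
    (is "_ \<le> real (card ?G)")
proof -
  define X where "X = eps * real (card P)"
  define m where "m = card PK"
  define E where "E = pairs2 PK \<inter> EPi"
  define H where "H = heavy_slabs (sg * eps / (100 * real r0) * real (card P)) PK r0 y"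
  define M where "M = {e\<in>E. \<not> (\<exists>h\<in>H. crosses_transversally e (slab r0 y h))}"
  have PK: "PK \<subseteq> P \<inter> K" "m = nat \<lceil>X\<rceil>" and E_ge: "sg / 2 * real (m choose 2) \<le> real (card E)"
    using witness unfolding restricted_witness_def E_def m_def X_def by auto
  have X: "4 \<le> X" "X \<le> real m" using large PK(2) unfolding X_def by linarith+
  have "real (card M) \<le> real m * (real (r0 + 1) * (sg * X / (100 * real r0)) + 3 * (sg * X / 100))"
    unfolding M_def m_def
  proof (rule card_edges_missing_heavy_slabs_le[OF lines fin])
    fix i assume "i \<le> r0"
    then show "real (card (PK \<inter> slab r0 y i)) \<le> sg * X / 100"
      using card_witness_slab_less_if_not_crowded[OF sparse PK(1) fin] unfolding X_def by force
    show "real (card (PK \<inter> slab r0 y i)) \<le> sg * X / (100 * real r0)" if "i \<notin> H"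
      using that \<open>i \<le> r0\<close> unfolding H_def heavy_slabs_def X_def by auto
  next
    show "PK \<subseteq> P" using PK(1) by blast
    show "E \<subseteq> pairs2 PK" unfolding E_def by blast
    show "H \<subseteq> {..r0}" unfolding H_def heavy_slabs_def by blast
    show "0 \<le> sg * X / (100 * real r0)" using \<open>0 < sg\<close> X by simp
  qed
  also have "\<dots> \<le> real m * (sg * X / 20)"
  proof -
    have "real (r0 + 1) * (sg * X) \<le> 2 * real r0 * (sg * X)"
      using \<open>1 \<le> r0\<close> \<open>0 < sg\<close> X by (intro mult_right_mono) auto
    then have "real (r0 + 1) * (sg * X / (100 * real r0)) \<le> sg * X / 50"
      using \<open>1 \<le> r0\<close> by (simp add: field_simps)
    then show ?thesis by (intro mult_left_mono) (linarith, simp)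
  qed
  finally have M_le: "real (card M) \<le> real m * (sg * X / 20)" .
  have "E = ?G \<union> M" unfolding E_def M_def H_def by auto
  then have "card E \<le> card ?G + card M" using card_Un_le[of ?G M] by simp
  then have "sg / 2 * (real m * (real m - 1) / 2) \<le> real (card ?G) + real m * (sg * X / 20)"
    using E_ge M_le unfolding real_choose_two by linarith
  then show ?thesis
    unfolding X_def[symmetric] by (rule remaining_edges_ge[OF \<open>0 < sg\<close> X])
qed

lemma middle_slab_exists:
  fixes P :: "pt set" and r0 :: nat
  assumes fin: "finite P" and large: "4 \<le> eps * real (card P)" and "0 < sg" "1 \<le> r0"
    and witness: "restricted_witness eps (sg / 2) P EPi K PK"
    and lines: "vertical_lines P r0 y"
    and sparse: "\<not> crowded (1/100 * sg * eps) P r0 y K"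
  shows "\<exists>i\<le>r0.
    sg * eps / (100 * real r0) * real (card P) \<le> real (card (PK \<inter> slab r0 y i)) \<and>
    real (card (PK \<inter> slab r0 y i)) \<le> 1/100 * sg * eps * real (card P) \<and>
    real (card {e \<in> pairs2 PK \<inter> EPi. crosses_transversally e (slab r0 y i)})
      \<ge> 1/20 * sg * eps^2 * (real (card P))^2 / real r0"
proof -
  define H where "H = heavy_slabs (sg * eps / (100 * real r0) * real (card P)) PK r0 y"
  define C where "C h = {e \<in> pairs2 PK \<inter> EPi. crosses_transversally e (slab r0 y h)}" for h
  have "\<Union>(C ` H) = {e \<in> pairs2 PK \<inter> EPi. \<exists>h\<in>H. crosses_transversally e (slab r0 y h)}"
    unfolding C_def by auto
  then have crossing: "sg * (eps * real (card P))^2 / 10 \<le> real (card (\<Union>(C ` H)))"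
    using card_edges_crossing_heavy_slabs_ge[OF assms] unfolding H_def by simp
  have "0 < eps * real (card P)" using large by linarith
  from mult_pos_pos[OF \<open>0 < sg\<close> zero_less_power[OF this, of 2]]
  have "0 < sg * (eps * real (card P))^2 / 10" by simp
  with crossing have "H \<noteq> {}" by auto
  have H_le: "H \<subseteq> {..r0}" unfolding H_def heavy_slabs_def by auto
  then obtain h where h: "h \<in> H" "card (\<Union>(C ` H)) \<le> card H * card (C h)"
    using exists_card_UN_le_card_mult[of H C] \<open>H \<noteq> {}\<close> finite_subset by blast
  have "card H \<le> 2 * r0"
    using card_mono[of "{..r0}" H] H_le \<open>1 \<le> r0\<close> by simp
  note crossing
  also have "real (card (\<Union>(C ` H))) \<le> real (card H) * real (card (C h))"
    using h(2) by (simp flip: of_nat_mult)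
  also have "\<dots> \<le> 2 * real r0 * real (card (C h))"
    using \<open>card H \<le> 2 * r0\<close> by (intro mult_right_mono) auto
  finally have "1/20 * sg * eps^2 * (real (card P))^2 / real r0 \<le> real (card (C h))"
    using \<open>1 \<le> r0\<close> by (simp add: field_simps power_mult_distrib)
  moreover have "real (card (PK \<inter> slab r0 y h)) \<le> 1/100 * sg * eps * real (card P)"
    using card_witness_slab_less_if_not_crowded[OF sparse _ fin, of PK h] witness h(1) H_le
    unfolding restricted_witness_def by auto
  moreover have "sg * eps / (100 * real r0) * real (card P) \<le> real (card (PK \<inter> slab r0 y h))"
    using h(1) unfolding H_def heavy_slabs_def by simp
  ultimately show ?thesis
    using h(1) H_le unfolding C_def by auto
qed

theorem mainTheorem5:
  "\<exists>C0 c N0 :: real. 0 < C0 \<and> C0 < 1/4 \<and> 0 < c \<and> 0 < N0 \<and>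
    (\<forall>(P :: pt set) eps sg (r0 :: nat) EPi K PK y.
       finite P \<and> general_position P \<and>
       0 < eps \<and> eps < 1 \<and> eps * real (card P) \<ge> N0 \<and>
       0 < sg \<and> sg \<le> 1 \<and> r0 \<ge> 1 \<and>
       EPi \<subseteq> pairs2 P \<and> convex K \<and>
       restricted_witness eps (sg / 2) P EPi K PK \<and>
       vertical_lines P r0 y \<and>
       \<not> crowded (C0 * sg * eps) P r0 y K
     \<longrightarrow>
       (\<exists>i\<le>r0.
          sg * eps / (100 * real r0) * real (card P) \<le> real (card (PK \<inter> slab r0 y i)) \<and>
          real (card (PK \<inter> slab r0 y i)) \<le> C0 * sg * eps * real (card P) \<and>
          real (card {e \<in> pairs2 PK \<inter> EPi. crosses_transversally e (slab r0 y i)})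
            \<ge> c * sg * eps^2 * (real (card P))^2 / real r0))"
  by (rule exI[of _ "1/100"], rule exI[of _ "1/20"], rule exI[of _ 4],
      intro conjI allI impI; (elim conjE, rule middle_slab_exists)?) (assumption | simp)+

end
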